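(* Let $f:(L_1,[\cdot,\cdot]_1,\alpha_1)\to(L_2,[\cdot,\cdot]_2,\alpha_2)$ be a surjective morphism of Hom-Lie algebras over a field $F$. If $\mu_A$ is a fuzzy Hom-Lie ideal of $L_1$, then the fuzzy set $\mu_{f(A)}$ on $L_2$, defined by $\mu_{f(A)}(y)=\sup_{x\in f^{-1}(y)}\mu_A(x)$ for $y\in f(L_1)$ and $\mu_{f(A)}(y)=0$ otherwise, is a fuzzy Hom-Lie ideal of $L_2$.
   Context: A Hom-Lie algebra over $F$ is a triple $(L,[\cdot,\cdot],\alpha)$ with $L$ an $F$-vector space, $\alpha:L\to L$ linear and $[\cdot,\cdot]$ bilinear, skew-symmetric, satisfying $[\alpha(x),[y,z]]+[\alpha(y),[z,x]]+[\alpha(z),[x,y]]=0$. A morphism of Hom-Lie algebras is a linear map $f$ with $f([x,y]_1)=[f(x),f(y)]_2$ and $f\circ\alpha_1=\alpha_2\circ f$. A fuzzy subset $\mu:L\to[0,1]$ is a fuzzy Hom-Lie ideal if for all $x,y\in L$, $c\in F$: $\mu(x+y)\ge\min\{\mu(x),\mu(y)\}$, $\mu(cx)\ge\mu(x)$, $\mu([x,y])\ge\max\{\mu(x),\mu(y)\}$, $\mu(\alpha(x))\ge\mu(x)$. *)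

theory Defs
  imports Complex_Main
begin

definition hom_lie_algebra ::
  "('f::field \<Rightarrow> 'a::ab_group_add \<Rightarrow> 'a) \<Rightarrow> ('a \<Rightarrow> 'a \<Rightarrow> 'a) \<Rightarrow> ('a \<Rightarrow> 'a) \<Rightarrow> bool" where
  "hom_lie_algebra scale br alpha \<longleftrightarrow>
     vector_space scale \<and>
     Vector_Spaces.linear scale scale alpha \<and>
     (\<forall>y. Vector_Spaces.linear scale scale (\<lambda>x. br x y)) \<and>
     (\<forall>x. Vector_Spaces.linear scale scale (\<lambda>y. br x y)) \<and>
     (\<forall>x y. br x y = - br y x) \<and>
     (\<forall>x y z. br (alpha x) (br y z) + br (alpha y) (br z x) + br (alpha z) (br x y) = 0)"

definition hom_lie_morphism ::
  "('f::field \<Rightarrow> 'a::ab_group_add \<Rightarrow> 'a) \<Rightarrow> ('a \<Rightarrow> 'a \<Rightarrow> 'a) \<Rightarrow> ('a \<Rightarrow> 'a) \<Rightarrow>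
   ('f \<Rightarrow> 'b::ab_group_add \<Rightarrow> 'b) \<Rightarrow> ('b \<Rightarrow> 'b \<Rightarrow> 'b) \<Rightarrow> ('b \<Rightarrow> 'b) \<Rightarrow> ('a \<Rightarrow> 'b) \<Rightarrow> bool" where
  "hom_lie_morphism s1 br1 a1 s2 br2 a2 f \<longleftrightarrow>
     Vector_Spaces.linear s1 s2 f \<and>
     (\<forall>x y. f (br1 x y) = br2 (f x) (f y)) \<and>
     f \<circ> a1 = a2 \<circ> f"

definition fuzzy_hom_lie_ideal ::
  "('f::field \<Rightarrow> 'a::ab_group_add \<Rightarrow> 'a) \<Rightarrow> ('a \<Rightarrow> 'a \<Rightarrow> 'a) \<Rightarrow> ('a \<Rightarrow> 'a) \<Rightarrow> ('a \<Rightarrow> real) \<Rightarrow> bool" where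
  "fuzzy_hom_lie_ideal scale br alpha \<mu> \<longleftrightarrow>
     (\<forall>x. 0 \<le> \<mu> x \<and> \<mu> x \<le> 1) \<and>
     (\<forall>x y. \<mu> (x + y) \<ge> min (\<mu> x) (\<mu> y)) \<and>
     (\<forall>c x. \<mu> (scale c x) \<ge> \<mu> x) \<and>
     (\<forall>x y. \<mu> (br x y) \<ge> max (\<mu> x) (\<mu> y)) \<and>
     (\<forall>x. \<mu> (alpha x) \<ge> \<mu> x)"

definition fuzzy_image :: "('a \<Rightarrow> 'b) \<Rightarrow> ('a \<Rightarrow> real) \<Rightarrow> 'b \<Rightarrow> real" where
  "fuzzy_image f \<mu> y = (if y \<in> range f then Sup (\<mu> ` (f -` {y})) else 0)"

end

theory Submission
  imports Defs
begin

text \<open>The image \<open>\<nu> = fuzzy_image f \<mu>\<close> inherits each closure condition from \<open>\<mu>\<close> because \<open>f\<close> carries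
every operation of \<open>L\<^sub>1\<close> (sum, scaling, bracket, twist) to the corresponding one of \<open>L\<^sub>2\<close>:
a preimage of an argument is mapped by the operation to a preimage of the result, so \<open>\<nu>\<close> of the
result bounds \<open>\<mu>\<close> of every such preimage.  Surjectivity supplies preimages of the other argument
of the bracket, and for the sum, where only a minimum is controlled, one lifts both summands to
preimages whose \<open>\<mu>\<close>-values come arbitrarily close to the suprema.\<close>

lemma fuzzy_image_upper:
  assumes "bdd_above (range \<mu>)"
  shows "\<mu> x \<le> fuzzy_image f \<mu> (f x)"
proof -
  have "bdd_above (\<mu> ` (f -` {f x}))"
    using assms by (rule bdd_above_mono) auto
  then show ?thesis
    unfolding fuzzy_image_def by (simp add: cSUP_upper)
qed

lemma fuzzy_image_least:
  assumes "surj f" and "\<And>x. f x = y \<Longrightarrow> \<mu> x \<le> M"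
  shows "fuzzy_image f \<mu> y \<le> M"
proof -
  have "f -` {y} \<noteq> {}"
    using \<open>surj f\<close> by (metis surjD vimage_singleton_eq empty_iff)
  then have "Sup (\<mu> ` (f -` {y})) \<le> M"
    by (rule cSUP_least) (use assms(2) in auto)
  then show ?thesis
    unfolding fuzzy_image_def using \<open>surj f\<close> by simp
qed

lemma less_fuzzy_image_iff:
  assumes "surj f" and "bdd_above (range \<mu>)"
  shows "t < fuzzy_image f \<mu> y \<longleftrightarrow> (\<exists>x. f x = y \<and> t < \<mu> x)"
proof -
  have "f -` {y} \<noteq> {}"
    using \<open>surj f\<close> by (metis surjD vimage_singleton_eq empty_iff)
  moreover have "bdd_above (\<mu> ` (f -` {y}))"
    using assms(2) by (rule bdd_above_mono) auto
  ultimately show ?thesis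
    unfolding fuzzy_image_def using \<open>surj f\<close> by (auto simp: less_cSUP_iff)
qed

lemma fuzzy_image_bounds:
  assumes "surj f" and "\<And>x. a \<le> \<mu> x \<and> \<mu> x \<le> b"
  shows "a \<le> fuzzy_image f \<mu> y \<and> fuzzy_image f \<mu> y \<le> b"
proof
  obtain x where "f x = y"
    using \<open>surj f\<close> by (metis surjD)
  moreover have "bdd_above (range \<mu>)"
    using assms(2) by (meson bdd_aboveI2)
  ultimately show "a \<le> fuzzy_image f \<mu> y"
    using assms(2) fuzzy_image_upper order_trans by metis
  show "fuzzy_image f \<mu> y \<le> b"
    using assms by (blast intro: fuzzy_image_least)
qed

lemma fuzzy_image_le_map:
  assumes "surj f" and "bdd_above (range \<mu>)"
    and "\<And>x. f (h x) = k (f x)" and "\<And>x. \<mu> x \<le> \<mu> (h x)"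
  shows "fuzzy_image f \<mu> y \<le> fuzzy_image f \<mu> (k y)"
proof (rule fuzzy_image_least[OF \<open>surj f\<close>])
  fix x assume "f x = y"
  have "\<mu> (h x) \<le> fuzzy_image f \<mu> (k y)"
    using fuzzy_image_upper[OF assms(2), of "h x" f] \<open>f x = y\<close> assms(3) by simp
  then show "\<mu> x \<le> fuzzy_image f \<mu> (k y)"
    using assms(4) order_trans by blast
qed

lemma fuzzy_image_max_le_map2:
  assumes "surj f" and "bdd_above (range \<mu>)"
    and "\<And>a b. f (h a b) = k (f a) (f b)" and "\<And>a b. max (\<mu> a) (\<mu> b) \<le> \<mu> (h a b)"
  shows "max (fuzzy_image f \<mu> x) (fuzzy_image f \<mu> y) \<le> fuzzy_image f \<mu> (k x y)"
proof -
  obtain a b where "f a = x" "f b = y"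
    using \<open>surj f\<close> by (metis surjD)
  have "fuzzy_image f \<mu> x \<le> fuzzy_image f \<mu> (k x y)"
    using fuzzy_image_le_map[OF assms(1,2), where h = "\<lambda>a. h a b" and k = "\<lambda>x. k x y"]
      assms(3,4) \<open>f b = y\<close> by (metis max.bounded_iff)
  moreover have "fuzzy_image f \<mu> y \<le> fuzzy_image f \<mu> (k x y)"
    using fuzzy_image_le_map[OF assms(1,2), where h = "\<lambda>b. h a b" and k = "\<lambda>y. k x y"]
      assms(3,4) \<open>f a = x\<close> by (metis max.bounded_iff)
  ultimately show ?thesis
    by simp
qed

lemma fuzzy_image_min_le_map2:
  assumes "surj f" and "bdd_above (range \<mu>)"
    and "\<And>a b. f (h a b) = k (f a) (f b)" and "\<And>a b. min (\<mu> a) (\<mu> b) \<le> \<mu> (h a b)"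
  shows "min (fuzzy_image f \<mu> x) (fuzzy_image f \<mu> y) \<le> fuzzy_image f \<mu> (k x y)"
proof (rule dense_le)
  fix t assume "t < min (fuzzy_image f \<mu> x) (fuzzy_image f \<mu> y)"
  then obtain a b where "f a = x" "t < \<mu> a" "f b = y" "t < \<mu> b"
    using less_fuzzy_image_iff[OF assms(1,2)] by (metis min_less_iff_conj)
  then have "t < \<mu> (h a b)"
    using assms(4)[of a b] by linarith
  also have "\<mu> (h a b) \<le> fuzzy_image f \<mu> (k x y)"
    using fuzzy_image_upper[OF assms(2), of "h a b" f] assms(3) \<open>f a = x\<close> \<open>f b = y\<close> by simp
  finally show "t \<le> fuzzy_image f \<mu> (k x y)"
    by simp
qed

lemma hom_lie_morphism_eqs:
  assumes "hom_lie_morphism s1 br1 a1 s2 br2 a2 f"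
  shows "f (x + y) = f x + f y" and "f (s1 c x) = s2 c (f x)"
    and "f (br1 x y) = br2 (f x) (f y)" and "f (a1 x) = a2 (f x)"
proof -
  have "module_hom s1 s2 f"
    using assms unfolding hom_lie_morphism_def linear_iff_module_hom by blast
  then show "f (x + y) = f x + f y" and "f (s1 c x) = s2 c (f x)"
    by (simp_all add: module_hom.add module_hom.scale)
  show "f (br1 x y) = br2 (f x) (f y)" and "f (a1 x) = a2 (f x)"
    using assms unfolding hom_lie_morphism_def by (auto simp: fun_eq_iff)
qed

theorem theorem6p3:
  fixes s1 :: "'f::field \<Rightarrow> 'a::ab_group_add \<Rightarrow> 'a"
    and s2 :: "'f \<Rightarrow> 'b::ab_group_add \<Rightarrow> 'b"
    and br1 :: "'a \<Rightarrow> 'a \<Rightarrow> 'a" and a1 :: "'a \<Rightarrow> 'a"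
    and br2 :: "'b \<Rightarrow> 'b \<Rightarrow> 'b" and a2 :: "'b \<Rightarrow> 'b"
    and f :: "'a \<Rightarrow> 'b" and \<mu> :: "'a \<Rightarrow> real"
  assumes "hom_lie_algebra s1 br1 a1"
    and "hom_lie_algebra s2 br2 a2"
    and "hom_lie_morphism s1 br1 a1 s2 br2 a2 f"
    and "surj f"
    and "fuzzy_hom_lie_ideal s1 br1 a1 \<mu>"
  shows "fuzzy_hom_lie_ideal s2 br2 a2 (fuzzy_image f \<mu>)"
proof -
  note hom = hom_lie_morphism_eqs[OF assms(3)]
  note ideal = assms(5)[unfolded fuzzy_hom_lie_ideal_def]
  have range01: "\<And>x. 0 \<le> \<mu> x \<and> \<mu> x \<le> 1"
    using ideal by blast
  then have bdd: "bdd_above (range \<mu>)"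
    by (meson bdd_aboveI2)
  show ?thesis
    unfolding fuzzy_hom_lie_ideal_def
  proof (intro conjI allI)
    show "0 \<le> fuzzy_image f \<mu> y" "fuzzy_image f \<mu> y \<le> 1" for y
      using fuzzy_image_bounds[OF assms(4) range01] by auto
    show "min (fuzzy_image f \<mu> x) (fuzzy_image f \<mu> y) \<le> fuzzy_image f \<mu> (x + y)" for x y
      using ideal
      by (intro fuzzy_image_min_le_map2[OF assms(4) bdd, where h = "(+)"]) (simp_all add: hom)
    show "fuzzy_image f \<mu> y \<le> fuzzy_image f \<mu> (s2 c y)" for c y
      using ideal
      by (intro fuzzy_image_le_map[OF assms(4) bdd, where h = "s1 c"]) (simp_all add: hom)
    show "max (fuzzy_image f \<mu> x) (fuzzy_image f \<mu> y) \<le> fuzzy_image f \<mu> (br2 x y)" for x y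
      using ideal
      by (intro fuzzy_image_max_le_map2[OF assms(4) bdd, where h = br1]) (simp_all add: hom)
    show "fuzzy_image f \<mu> y \<le> fuzzy_image f \<mu> (a2 y)" for y
      using ideal
      by (intro fuzzy_image_le_map[OF assms(4) bdd, where h = a1]) (simp_all add: hom)
  qed
qed

end
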